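(* Let $\psi=(N,h):\Sigma\to\mathbb{H}^2\times\mathbb{R}$ be a conformal immersion with regular vertical projection which, with respect to its canonical orientation ($u>0$), has constant mean curvature $H=1/2$. Then its hyperbolic Gauss map $G:\Sigma\to\mathbb{H}^2$ is harmonic, and $\langle G_z,G_z\rangle=-Q$, where $Q\,dz^2$ is the Abresch–Rosenberg differential of $\psi$.
   Context: $\mathbb{L}^4$ is $\mathbb{R}^4$ with metric $\langle,\rangle=-dx_0^2+dx_1^2+dx_2^2+dx_3^2$, $\mathbb{L}^3$ the subspace of the first three coordinates, $\mathbb{H}^2=\{x\in\mathbb{L}^3:\langle x,x\rangle=-1,x_0>0\}$, and $\mathbb{H}^2\times\mathbb{R}\subset\mathbb{L}^4$. A surface is a conformal immersion $\psi=(N,h):\Sigma\to\mathbb{H}^2\times\mathbb{R}$ of a connected Riemann surface, with $N:\Sigma\to\mathbb{H}^2$ (vertical projection), $h:\Sigma\to\mathbb{R}$ (height function, assumed not locally constant), induced metric $\lambda|dz|^2$ for a local conformal parameter $z$. Its unit normal $\eta=(\hat N,u)$ is the unit vector field in $\mathbb{L}^4$ orthogonal to $\psi_z,\psi_{\bar z}$ and to $N$ (i.e. normal to $\psi$ and tangent to $\mathbb{H}^2\times\mathbb{R}$); $u$ is the angle function. The Hopf differential is $p\,dz^2=-\langle\psi_z,\eta_z\rangle dz^2$, $H$ is the mean curvature, and the Abresch–Rosenberg differential is $Q\,dz^2$ with $Q=2Hp+h_z^2$. $\psi$ has regular vertical projection if $dN$ is an isomorphism everywhere, equivalently $u$ never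 vanishes; such a surface is canonically oriented so that $u>0$. Its hyperbolic Gauss map is the map $G:\Sigma\to\mathbb{H}^2$ defined by $(G,1)=\frac1u(\eta+N)$ (this vector lies in the future light cone and has last coordinate $1$). *)

theory Defs
  imports "HOL-Analysis.Analysis"
begin

text \<open>Lorentzian bilinear forms on L^3 and L^4 (first coordinate timelike).
  Polymorphic in the scalar ring so that they serve both as the real form and
  as its complex-bilinear extension.\<close>

definition lor3 :: "'a::comm_ring_1 ^ 3 \<Rightarrow> 'a ^ 3 \<Rightarrow> 'a" where
  "lor3 x y = - (x$1 * y$1) + x$2 * y$2 + x$3 * y$3"

definition lor4 :: "'a::comm_ring_1 ^ 4 \<Rightarrow> 'a ^ 4 \<Rightarrow> 'a" where
  "lor4 x y = - (x$1 * y$1) + x$2 * y$2 + x$3 * y$3 + x$4 * y$4"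

definition H2 :: "(real ^ 3) set" where
  "H2 = {x. lor3 x x = -1 \<and> x$1 > 0}"

definition proj3 :: "real ^ 4 \<Rightarrow> real ^ 3" where
  "proj3 x = vector [x$1, x$2, x$3]"

definition horiz :: "real ^ 4 \<Rightarrow> real ^ 4" where
  "horiz x = vector [x$1, x$2, x$3, 0]"

definition dx :: "(complex \<Rightarrow> 'b::real_normed_vector) \<Rightarrow> complex \<Rightarrow> 'b" where
  "dx f z = frechet_derivative f (at z) 1"

definition dy :: "(complex \<Rightarrow> 'b::real_normed_vector) \<Rightarrow> complex \<Rightarrow> 'b" where
  "dy f z = frechet_derivative f (at z) \<i>"

fun Ck :: "nat \<Rightarrow> complex set \<Rightarrow> (complex \<Rightarrow> 'b::real_normed_vector) \<Rightarrow> bool" where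
  "Ck 0 U f = continuous_on U f"
| "Ck (Suc k) U f = ((\<forall>z\<in>U. f differentiable (at z)) \<and> Ck k U (dx f) \<and> Ck k U (dy f))"

definition smooth_on :: "complex set \<Rightarrow> (complex \<Rightarrow> 'b::real_normed_vector) \<Rightarrow> bool" where
  "smooth_on U f \<longleftrightarrow> (\<forall>k. Ck k U f)"

definition cvec :: "real ^ 'n \<Rightarrow> complex ^ 'n" where
  "cvec v = (\<chi> i. complex_of_real (v$i))"

definition dz :: "(complex \<Rightarrow> real ^ 'n) \<Rightarrow> complex \<Rightarrow> complex ^ 'n" where
  "dz f z = (1/2) *s (cvec (dx f z) - \<i> *s cvec (dy f z))"

definition dz_real :: "(complex \<Rightarrow> real) \<Rightarrow> complex \<Rightarrow> complex" where
  "dz_real f z = (complex_of_real (dx f z) - \<i> * complex_of_real (dy f z)) / 2"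

definition laplacian :: "(complex \<Rightarrow> 'b::real_normed_vector) \<Rightarrow> complex \<Rightarrow> 'b" where
  "laplacian f z = dx (dx f) z + dy (dy f) z"

text \<open>Conformal factor lambda (metric lambda |dz|^2).\<close>
definition conf_factor :: "(complex \<Rightarrow> real ^ 4) \<Rightarrow> complex \<Rightarrow> real" where
  "conf_factor \<psi> z = lor4 (dx \<psi> z) (dx \<psi> z)"

definition conformal_immersion_H2R :: "complex set \<Rightarrow> (complex \<Rightarrow> real ^ 4) \<Rightarrow> bool" where
  "conformal_immersion_H2R U \<psi> \<longleftrightarrow>
     smooth_on U \<psi> \<and>
     (\<forall>z\<in>U. proj3 (\<psi> z) \<in> H2 \<and>
             lor4 (dz \<psi> z) (dz \<psi> z) = 0 \<and>
             conf_factor \<psi> z > 0)"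

definition unit_normal :: "complex set \<Rightarrow> (complex \<Rightarrow> real ^ 4) \<Rightarrow> (complex \<Rightarrow> real ^ 4) \<Rightarrow> bool" where
  "unit_normal U \<psi> \<eta> \<longleftrightarrow>
     smooth_on U \<eta> \<and>
     (\<forall>z\<in>U. lor4 (\<eta> z) (\<eta> z) = 1 \<and>
             lor4 (\<eta> z) (dx \<psi> z) = 0 \<and>
             lor4 (\<eta> z) (dy \<psi> z) = 0 \<and>
             lor4 (\<eta> z) (horiz (\<psi> z)) = 0)"

text \<open>Mean curvature: Delta psi has normal component 2 lambda H eta.\<close>
definition mean_curv :: "(complex \<Rightarrow> real ^ 4) \<Rightarrow> (complex \<Rightarrow> real ^ 4) \<Rightarrow> complex \<Rightarrow> real" where
  "mean_curv \<psi> \<eta> z = lor4 (laplacian \<psi> z) (\<eta> z) / (2 * conf_factor \<psi> z)"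

definition hopf :: "(complex \<Rightarrow> real ^ 4) \<Rightarrow> (complex \<Rightarrow> real ^ 4) \<Rightarrow> complex \<Rightarrow> complex" where
  "hopf \<psi> \<eta> z = - lor4 (dz \<psi> z) (dz \<eta> z)"

definition height :: "(complex \<Rightarrow> real ^ 4) \<Rightarrow> complex \<Rightarrow> real" where
  "height \<psi> z = \<psi> z $ 4"

definition AR_diff :: "(complex \<Rightarrow> real ^ 4) \<Rightarrow> (complex \<Rightarrow> real ^ 4) \<Rightarrow> complex \<Rightarrow> complex" where
  "AR_diff \<psi> \<eta> z = 2 * complex_of_real (mean_curv \<psi> \<eta> z) * hopf \<psi> \<eta> z
                      + (dz_real (height \<psi>) z)^2"

text \<open>Hyperbolic Gauss map: (G,1) = (eta + N)/u, u = last coordinate of eta.\<close>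
definition hyp_gauss :: "(complex \<Rightarrow> real ^ 4) \<Rightarrow> (complex \<Rightarrow> real ^ 4) \<Rightarrow> complex \<Rightarrow> real ^ 3" where
  "hyp_gauss \<psi> \<eta> z = (1 / (\<eta> z $ 4)) *\<^sub>R (proj3 (\<eta> z) + proj3 (\<psi> z))"

text \<open>Harmonic map into H^2: smooth, H^2-valued, and vanishing tension field,
  i.e. the component of the Laplacian tangent to H^2 vanishes.\<close>
definition harmonic_H2 :: "complex set \<Rightarrow> (complex \<Rightarrow> real ^ 3) \<Rightarrow> bool" where
  "harmonic_H2 U G \<longleftrightarrow>
     smooth_on U G \<and>
     (\<forall>z\<in>U. G z \<in> H2 \<and>
        laplacian G z + lor3 (laplacian G z) (G z) *\<^sub>R G z = 0)"

end

(* Write u for the angle function, lambda for the conformal factor and N^ = (N,0). The lift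
   G^ = (G,1) = (eta + N^)/u of the hyperbolic Gauss map is a null vector orthogonal to psi_x and
   psi_y, so every v with <v,G^> = 0 and v_4 = 0, in particular G^_x and G^_y, is a combination of
   psi_x, psi_y and G^. Differentiating <G^,psi_x> = <G^,psi_y> = 0 shows that the psi-components of
   G^_x and G^_y form a symmetric matrix, and H = 1/2 is exactly what makes its trace equal to
   u lambda. Together with the derivative of u, obtained by differentiating u G^ = eta + N^, this
   gives <Delta G^, psi_x - (psi_x)_4 G^> = <Delta G^, psi_y - (psi_y)_4 G^> = 0, so Delta G^ is a
   multiple of (0,1) - G^; projected to L^3 this is the harmonic map equation for G. The same
   description of G^_x and G^_y expresses <G_z,G_z> through the second fundamental form and h_z,
   which gives -Q. *)

theory Submission
  imports Defs
begin

section \<open>Partial derivatives and smoothness\<close>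

lemma frechet_derivative_cong_open:
  assumes "open U" "z \<in> U" "\<And>w. w \<in> U \<Longrightarrow> f w = g w"
  shows "frechet_derivative f (at z) = frechet_derivative g (at z)"
proof -
  have "(f has_derivative D) (at z) \<longleftrightarrow> (g has_derivative D) (at z)" for D
    using has_derivative_transform_within_open[OF _ assms(1,2), where f=f and g=g]
      has_derivative_transform_within_open[OF _ assms(1,2), where f=g and g=f] assms(3) by metis
  then show ?thesis
    unfolding frechet_derivative_def by simp
qed

lemma differentiable_cong_open:
  assumes "open U" "z \<in> U" "\<And>w. w \<in> U \<Longrightarrow> f w = g w"
  shows "f differentiable (at z) \<longleftrightarrow> g differentiable (at z)"
  using has_derivative_transform_within_open[OF _ assms(1,2), where f=f and g=g]
    has_derivative_transform_within_open[OF _ assms(1,2), where f=g and g=f] assms(3)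
  unfolding differentiable_def by metis

lemma dx_dy_cong_open:
  assumes "open U" "z \<in> U" "\<And>w. w \<in> U \<Longrightarrow> f w = g w"
  shows "dx f z = dx g z" "dy f z = dy g z"
  using frechet_derivative_cong_open[OF assms] by (simp_all add: dx_def dy_def)

lemma has_derivative_dx_dy:
  assumes "(f has_derivative D) (at z)"
  shows "dx f z = D 1" "dy f z = D \<i>"
  using frechet_derivative_at[OF assms] by (simp_all add: dx_def dy_def)

lemma dx_dy_const [simp]: "dx (\<lambda>w. c) z = 0" "dy (\<lambda>w. c) z = 0"
  by (simp_all add: dx_def dy_def)

lemma dx_dy_add:
  assumes "f differentiable (at z)" "g differentiable (at z)"
  shows "dx (\<lambda>w. f w + g w) z = dx f z + dx g z" "dy (\<lambda>w. f w + g w) z = dy f z + dy g z"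
  using has_derivative_dx_dy[OF has_derivative_add[OF
        assms[THEN frechet_derivative_works[THEN iffD1]]]]
  by (simp_all add: dx_def dy_def)

lemma dx_dy_bounded_linear:
  assumes "bounded_linear L" "f differentiable (at z)"
  shows "dx (\<lambda>w. L (f w)) z = L (dx f z)" "dy (\<lambda>w. L (f w)) z = L (dy f z)"
  using has_derivative_dx_dy[OF bounded_linear.has_derivative[OF assms(1)
      assms(2)[THEN frechet_derivative_works[THEN iffD1]]]]
  by (simp_all add: dx_def dy_def)

lemma dx_dy_bounded_bilinear:
  assumes "bounded_bilinear P" "f differentiable (at z)" "g differentiable (at z)"
  shows "dx (\<lambda>w. P (f w) (g w)) z = P (f z) (dx g z) + P (dx f z) (g z)"
    "dy (\<lambda>w. P (f w) (g w)) z = P (f z) (dy g z) + P (dy f z) (g z)"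
  using has_derivative_dx_dy[OF bounded_bilinear.FDERIV[OF assms(1)
      assms(2,3)[THEN frechet_derivative_works[THEN iffD1]]]]
  by (simp_all add: dx_def dy_def)

lemma dx_dy_inverse:
  fixes f :: "complex \<Rightarrow> real"
  assumes "f differentiable (at z)" "f z \<noteq> 0"
  shows "dx (\<lambda>w. inverse (f w)) z = - dx f z / (f z)\<^sup>2"
    "dy (\<lambda>w. inverse (f w)) z = - dy f z / (f z)\<^sup>2"
  using has_derivative_dx_dy[OF Deriv.has_derivative_inverse[OF assms(2)
      assms(1)[THEN frechet_derivative_works[THEN iffD1]]]]
  by (simp_all add: dx_def dy_def field_simps power2_eq_square)

lemma differentiable_bounded_linear:
  "bounded_linear L \<Longrightarrow> f differentiable (at z) \<Longrightarrow> (\<lambda>w. L (f w)) differentiable (at z)"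
  using bounded_linear.has_derivative unfolding differentiable_def by blast

lemma differentiable_bounded_bilinear:
  "bounded_bilinear P \<Longrightarrow> f differentiable (at z) \<Longrightarrow> g differentiable (at z)
    \<Longrightarrow> (\<lambda>w. P (f w) (g w)) differentiable (at z)"
  using bounded_bilinear.FDERIV unfolding differentiable_def by blast

lemma Ck_cong_open:
  assumes "open U" "\<And>w. w \<in> U \<Longrightarrow> f w = g w"
  shows "Ck k U f = Ck k U g"
  using assms(2)
proof (induction k arbitrary: f g)
  case 0
  then show ?case
    using continuous_on_cong by force
next
  case (Suc k)
  have "Ck k U (dx f) = Ck k U (dx g)" "Ck k U (dy f) = Ck k U (dy g)"
    using dx_dy_cong_open[OF assms(1) _ Suc.prems] by (auto intro!: Suc.IH)
  moreover have "(\<forall>z\<in>U. f differentiable (at z)) = (\<forall>z\<in>U. g differentiable (at z))"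
    using differentiable_cong_open[OF assms(1)] Suc.prems by blast
  ultimately show ?case
    by simp
qed

lemma Ck_Suc_imp_Ck: "Ck (Suc k) U f \<Longrightarrow> Ck k U f"
proof (induction k arbitrary: f)
  case 0
  then show ?case
    by (simp add: continuous_at_imp_continuous_on differentiable_imp_continuous_within)
next
  case (Suc k)
  then show ?case
    by (metis Ck.simps(2))
qed

lemma Ck_SucI:
  assumes "open U" "\<forall>z\<in>U. f differentiable (at z)" "Ck k U fx" "Ck k U fy"
    and "\<And>z. z \<in> U \<Longrightarrow> dx f z = fx z \<and> dy f z = fy z"
  shows "Ck (Suc k) U f"
  using assms Ck_cong_open[OF assms(1), of "dx f" fx k] Ck_cong_open[OF assms(1), of "dy f" fy k]
  by simp

lemma Ck_add:
  assumes "open U"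
  shows "Ck k U f \<Longrightarrow> Ck k U g \<Longrightarrow> Ck k U (\<lambda>z. f z + g z)"
proof (induction k arbitrary: f g)
  case 0
  then show ?case
    by (simp add: continuous_on_add)
next
  case (Suc k)
  then show ?case
    by (intro Ck_SucI[OF assms, where fx="\<lambda>z. dx f z + dx g z" and fy="\<lambda>z. dy f z + dy g z"])
      (simp_all add: dx_dy_add)
qed

lemma Ck_bounded_linear:
  assumes "open U" "bounded_linear L"
  shows "Ck k U f \<Longrightarrow> Ck k U (\<lambda>z. L (f z))"
proof (induction k arbitrary: f)
  case 0
  then show ?case
    using bounded_linear.continuous_on[OF assms(2)] by simp
next
  case (Suc k)
  then show ?case
    by (intro Ck_SucI[OF assms(1), where fx="\<lambda>z. L (dx f z)" and fy="\<lambda>z. L (dy f z)"])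
      (simp_all add: dx_dy_bounded_linear[OF assms(2)] differentiable_bounded_linear[OF assms(2)])
qed

lemma Ck_bounded_bilinear:
  assumes "open U" "bounded_bilinear P"
  shows "Ck k U f \<Longrightarrow> Ck k U g \<Longrightarrow> Ck k U (\<lambda>z. P (f z) (g z))"
proof (induction k arbitrary: f g)
  case 0
  then show ?case
    using bounded_bilinear.continuous_on[OF assms(2)] by simp
next
  case (Suc k)
  have f: "\<forall>z\<in>U. f differentiable (at z)" "Ck k U f" "Ck k U (dx f)" "Ck k U (dy f)"
    and g: "\<forall>z\<in>U. g differentiable (at z)" "Ck k U g" "Ck k U (dx g)" "Ck k U (dy g)"
    using Suc.prems Ck_Suc_imp_Ck by simp_all
  show ?case
  proof (rule Ck_SucI[OF assms(1)])
    show "Ck k U (\<lambda>z. P (f z) (dx g z) + P (dx f z) (g z))"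
      "Ck k U (\<lambda>z. P (f z) (dy g z) + P (dy f z) (g z))"
      using f g by (simp_all add: Ck_add[OF assms(1)] Suc.IH)
  qed (use f g in \<open>simp_all add: dx_dy_bounded_bilinear[OF assms(2)]
        differentiable_bounded_bilinear[OF assms(2)]\<close>)
qed

lemma Ck_inverse:
  fixes f :: "complex \<Rightarrow> real"
  assumes "open U" "\<forall>z\<in>U. f z \<noteq> 0"
  shows "Ck k U f \<Longrightarrow> Ck k U (\<lambda>z. inverse (f z))"
proof (induction k)
  case 0
  then show ?case
    using assms(2) by (auto intro: continuous_on_inverse)
next
  case (Suc k)
  have f: "\<forall>z\<in>U. f differentiable (at z)" "Ck k U (dx f)" "Ck k U (dy f)"
    using Suc.prems by simp_all
  have inv: "Ck k U (\<lambda>z. inverse (f z))"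
    using Suc.IH[OF Ck_Suc_imp_Ck[OF Suc.prems]] .
  have sq: "Ck k U (\<lambda>z. - (inverse (f z) * inverse (f z)))"
    using Ck_bounded_linear[OF assms(1) bounded_linear_minus[OF bounded_linear_ident]
        Ck_bounded_bilinear[OF assms(1) bounded_bilinear_mult inv inv]] by simp
  show ?case
  proof (rule Ck_SucI[OF assms(1)])
    show "Ck k U (\<lambda>z. - (inverse (f z) * inverse (f z)) * dx f z)"
      "Ck k U (\<lambda>z. - (inverse (f z) * inverse (f z)) * dy f z)"
      using Ck_bounded_bilinear[OF assms(1) bounded_bilinear_mult sq] f by simp_all
  qed (use f assms(2) in \<open>simp_all add: dx_dy_inverse power2_eq_square divide_inverse\<close>)
qed

lemma smooth_on_imp_Ck: "smooth_on U f \<Longrightarrow> Ck k U f"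
  by (simp add: smooth_on_def)

lemma smooth_on_differentiable: "smooth_on U f \<Longrightarrow> z \<in> U \<Longrightarrow> f differentiable (at z)"
  using smooth_on_imp_Ck[of U f 1] by simp

lemma smooth_on_dx: "smooth_on U f \<Longrightarrow> smooth_on U (dx f)"
  and smooth_on_dy: "smooth_on U f \<Longrightarrow> smooth_on U (dy f)"
  unfolding smooth_on_def by (metis Ck.simps(2))+

lemma smooth_on_add:
  "open U \<Longrightarrow> smooth_on U f \<Longrightarrow> smooth_on U g \<Longrightarrow> smooth_on U (\<lambda>z. f z + g z)"
  by (simp add: smooth_on_def Ck_add)

lemma smooth_on_bounded_linear:
  "open U \<Longrightarrow> bounded_linear L \<Longrightarrow> smooth_on U f \<Longrightarrow> smooth_on U (\<lambda>z. L (f z))"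
  by (simp add: smooth_on_def Ck_bounded_linear)

lemma smooth_on_bounded_bilinear:
  "open U \<Longrightarrow> bounded_bilinear P \<Longrightarrow> smooth_on U f \<Longrightarrow> smooth_on U g
    \<Longrightarrow> smooth_on U (\<lambda>z. P (f z) (g z))"
  by (simp add: smooth_on_def Ck_bounded_bilinear)

lemma smooth_on_inverse:
  fixes f :: "complex \<Rightarrow> real"
  shows "open U \<Longrightarrow> \<forall>z\<in>U. f z \<noteq> 0 \<Longrightarrow> smooth_on U f \<Longrightarrow> smooth_on U (\<lambda>z. inverse (f z))"
  by (simp add: smooth_on_def Ck_inverse)

lemma laplacian_bounded_linear:
  assumes U: "open U" and z: "z \<in> U" and L: "bounded_linear L" and f: "Ck 2 U f"
  shows "laplacian (\<lambda>w. L (f w)) z = L (laplacian f z)"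
proof -
  have df: "\<forall>w\<in>U. f differentiable (at w)" and dfx: "\<forall>w\<in>U. dx f differentiable (at w)"
    and dfy: "\<forall>w\<in>U. dy f differentiable (at w)"
    using f by (simp_all add: numeral_2_eq_2)
  have Lf: "dx (\<lambda>w. L (f w)) w = L (dx f w)" "dy (\<lambda>w. L (f w)) w = L (dy f w)" if "w \<in> U" for w
    using dx_dy_bounded_linear[OF L df[rule_format, OF that]] by simp_all
  have "dx (dx (\<lambda>w. L (f w))) z = L (dx (dx f) z)"
    using dx_dy_cong_open(1)[OF U z Lf(1)] dx_dy_bounded_linear(1)[OF L dfx[rule_format, OF z]]
    by simp
  moreover have "dy (dy (\<lambda>w. L (f w))) z = L (dy (dy f) z)"
    using dx_dy_cong_open(2)[OF U z Lf(2)] dx_dy_bounded_linear(2)[OF L dfy[rule_format, OF z]]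
    by simp
  ultimately show ?thesis
    by (simp add: laplacian_def linear_add[OF bounded_linear.linear[OF L]])
qed

section \<open>Symmetry of second derivatives\<close>

lemma has_real_derivative_along_line:
  fixes g :: "complex \<Rightarrow> real"
  assumes "g differentiable (at (a + of_real s * v))"
  shows "((\<lambda>t. g (a + of_real t * v)) has_real_derivative
           frechet_derivative g (at (a + of_real s * v)) v) (at s)"
proof -
  let ?D = "frechet_derivative g (at (a + of_real s * v))"
  have g: "(g has_derivative ?D) (at (a + of_real s * v))"
    using assms frechet_derivative_works by blast
  have "((\<lambda>t. a + of_real t * v) has_derivative (\<lambda>h. h *\<^sub>R v)) (at s)"
    by (auto intro!: derivative_eq_intros simp: scaleR_conv_of_real)
  from has_derivative_compose[OF this g]
  have "((\<lambda>t. g (a + of_real t * v)) has_derivative (\<lambda>h. ?D v * h)) (at s)"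
    using linear_scale[OF has_derivative_linear[OF g]] by (simp add: mult.commute)
  then show ?thesis
    by (simp add: has_field_derivative_def)
qed

lemma second_difference_mean_value:
  fixes g :: "complex \<Rightarrow> real"
  assumes t: "t > 0"
    and dg: "\<And>s r. 0 \<le> s \<Longrightarrow> s \<le> t \<Longrightarrow> 0 \<le> r \<Longrightarrow> r \<le> t
      \<Longrightarrow> g differentiable (at (z + of_real s * v + of_real r * w))"
    and ddg: "\<And>s r. 0 \<le> s \<Longrightarrow> s \<le> t \<Longrightarrow> 0 \<le> r \<Longrightarrow> r \<le> t
      \<Longrightarrow> (\<lambda>p. frechet_derivative g (at p) v) differentiable (at (z + of_real s * v + of_real r * w))"
  shows "\<exists>s r. 0 < s \<and> s < t \<and> 0 < r \<and> r < t \<and>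
    g (z + of_real t * v + of_real t * w) - g (z + of_real t * v) - g (z + of_real t * w) + g z
      = t\<^sup>2 * frechet_derivative (\<lambda>p. frechet_derivative g (at p) v)
                (at (z + of_real s * v + of_real r * w)) w"
proof -
  define Dv where "Dv p = frechet_derivative g (at p) v" for p
  have "\<exists>s. 0 < s \<and> s < t \<and>
      (g (z + of_real t * w + of_real t * v) - g (z + of_real t * v))
        - (g (z + of_real t * w + of_real 0 * v) - g (z + of_real 0 * v))
      = (t - 0) * (Dv (z + of_real t * w + of_real s * v) - Dv (z + of_real s * v))"
  proof (rule MVT2[OF t])
    fix s assume "0 \<le> s" "s \<le> t"
    then show "((\<lambda>s. g (z + of_real t * w + of_real s * v) - g (z + of_real s * v))
        has_real_derivative Dv (z + of_real t * w + of_real s * v) - Dv (z + of_real s * v)) (at s)"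
      unfolding Dv_def using t dg[of s t] dg[of s 0]
      by (intro DERIV_diff has_real_derivative_along_line) (simp_all add: ac_simps)
  qed
  then obtain s where s: "0 < s" "s < t" and
    s_eq: "g (z + of_real t * v + of_real t * w) - g (z + of_real t * v)
      - g (z + of_real t * w) + g z
      = t * (Dv (z + of_real s * v + of_real t * w) - Dv (z + of_real s * v))"
    by (auto simp: algebra_simps)
  have "\<exists>r. 0 < r \<and> r < t \<and>
      Dv (z + of_real s * v + of_real t * w) - Dv (z + of_real s * v + of_real 0 * w)
      = (t - 0) * frechet_derivative Dv (at (z + of_real s * v + of_real r * w)) w"
  proof (rule MVT2[OF t])
    fix r assume "0 \<le> r" "r \<le> t"
    then show "((\<lambda>r. Dv (z + of_real s * v + of_real r * w)) has_real_derivative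
        frechet_derivative Dv (at (z + of_real s * v + of_real r * w)) w) (at r)"
      using s ddg[of s r] unfolding Dv_def[abs_def]
      by (intro has_real_derivative_along_line) simp
  qed
  then obtain r where "0 < r" "r < t"
    "Dv (z + of_real s * v + of_real t * w) - Dv (z + of_real s * v)
      = t * frechet_derivative Dv (at (z + of_real s * v + of_real r * w)) w"
    by auto
  with s s_eq show ?thesis
    unfolding Dv_def[abs_def] by (auto simp: power2_eq_square)
qed

lemma mixed_partials_meet:
  fixes g :: "complex \<Rightarrow> real"
  assumes g: "Ck 2 U g" and d: "d > 0" "ball z d \<subseteq> U"
  shows "\<exists>p q. dist p z < d \<and> dist q z < d \<and> dy (dx g) p = dx (dy g) q"
proof -
  have dg: "\<forall>p\<in>U. g differentiable (at p)" and dgx: "\<forall>p\<in>U. dx g differentiable (at p)"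
    and dgy: "\<forall>p\<in>U. dy g differentiable (at p)"
    using g by (simp_all add: numeral_2_eq_2)
  define t where "t = d / 3"
  have t: "t > 0"
    using d by (simp add: t_def)
  have near: "dist (z + of_real s * v + of_real r * w) z < d"
    if "0 \<le> s" "s \<le> t" "0 \<le> r" "r \<le> t" "norm v = 1" "norm w = 1" for s r v w
  proof -
    have "dist (z + of_real s * v + of_real r * w) z \<le> norm (of_real s * v) + norm (of_real r * w)"
      by (simp add: dist_norm norm_triangle_ineq)
    also have "\<dots> = s + r"
      using that by (simp add: norm_mult)
    finally show ?thesis
      using that d(1) unfolding t_def by linarith
  qed
  then have near1: "dist (z + of_real s + of_real r * \<i>) z < d"
    and near2: "dist (z + of_real s * \<i> + of_real r) z < d"
    if "0 \<le> s" "s \<le> t" "0 \<le> r" "r \<le> t" for s r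
    using near[OF that, of 1 \<i>] near[OF that, of \<i> 1] by simp_all
  have inU1: "z + of_real s + of_real r * \<i> \<in> U" and inU2: "z + of_real s * \<i> + of_real r \<in> U"
    if "0 \<le> s" "s \<le> t" "0 \<le> r" "r \<le> t" for s r
    using near1[OF that] near2[OF that] d(2) by (auto simp: dist_commute)
  have dx_eq: "dx g = (\<lambda>p. frechet_derivative g (at p) 1)"
    and dy_eq: "dy g = (\<lambda>p. frechet_derivative g (at p) \<i>)"
    by (simp_all add: fun_eq_iff dx_def dy_def)
  have "\<exists>s r. 0 < s \<and> s < t \<and> 0 < r \<and> r < t \<and>
      g (z + of_real t * 1 + of_real t * \<i>) - g (z + of_real t * 1) - g (z + of_real t * \<i>) + g z
        = t\<^sup>2 * frechet_derivative (dx g) (at (z + of_real s * 1 + of_real r * \<i>)) \<i>"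
    unfolding dx_eq using inU1 dg dgx[unfolded dx_eq]
    by (intro second_difference_mean_value[OF t]) simp_all
  then obtain s r where sr: "0 < s" "s < t" "0 < r" "r < t"
    "g (z + of_real t * 1 + of_real t * \<i>) - g (z + of_real t * 1) - g (z + of_real t * \<i>) + g z
      = t\<^sup>2 * dy (dx g) (z + of_real s + of_real r * \<i>)"
    unfolding dy_def by auto
  have "\<exists>s r. 0 < s \<and> s < t \<and> 0 < r \<and> r < t \<and>
      g (z + of_real t * \<i> + of_real t * 1) - g (z + of_real t * \<i>) - g (z + of_real t * 1) + g z
        = t\<^sup>2 * frechet_derivative (dy g) (at (z + of_real s * \<i> + of_real r * 1)) 1"
    unfolding dy_eq using inU2 dg dgy[unfolded dy_eq]
    by (intro second_difference_mean_value[OF t]) simp_all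
  then obtain s' r' where sr': "0 < s'" "s' < t" "0 < r'" "r' < t"
    "g (z + of_real t * \<i> + of_real t * 1) - g (z + of_real t * \<i>) - g (z + of_real t * 1) + g z
      = t\<^sup>2 * dx (dy g) (z + of_real s' * \<i> + of_real r')"
    unfolding dx_def by auto
  have "dy (dx g) (z + of_real s + of_real r * \<i>) = dx (dy g) (z + of_real s' * \<i> + of_real r')"
    using sr(5) sr'(5) t by (simp add: algebra_simps)
  then show ?thesis
    using near1[of s r] near2[of s' r'] sr sr' by (intro exI conjI) auto
qed

lemma dy_dx_commute_real:
  fixes g :: "complex \<Rightarrow> real"
  assumes U: "open U" and g: "Ck 2 U g" and z: "z \<in> U"
  shows "dy (dx g) z = dx (dy g) z"
proof -
  have "continuous_on U (dy (dx g))" "continuous_on U (dx (dy g))"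
    using g by (simp_all add: numeral_2_eq_2)
  then have A: "isCont (dy (dx g)) z" and B: "isCont (dx (dy g)) z"
    using U z continuous_on_eq_continuous_at by blast+
  have close: "\<bar>dy (dx g) z - dx (dy g) z\<bar> < 2 * e" if e: "e > 0" for e
  proof -
    obtain r where r: "r > 0" "ball z r \<subseteq> U"
      using U z open_contains_ball by blast
    obtain dA where dA: "dA > 0" "\<And>p. dist p z < dA \<Longrightarrow> \<bar>dy (dx g) p - dy (dx g) z\<bar> < e"
      using A e unfolding continuous_at_eps_delta dist_real_def by blast
    obtain dB where dB: "dB > 0" "\<And>p. dist p z < dB \<Longrightarrow> \<bar>dx (dy g) p - dx (dy g) z\<bar> < e"
      using B e unfolding continuous_at_eps_delta dist_real_def by blast
    have "ball z (min r (min dA dB)) \<subseteq> U"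
      using r(2) by (auto simp: subset_eq)
    then obtain p q where "dist p z < min r (min dA dB)" "dist q z < min r (min dA dB)"
      and "dy (dx g) p = dx (dy g) q"
      using mixed_partials_meet[OF g, of "min r (min dA dB)" z] r(1) dA(1) dB(1) by auto
    then show ?thesis
      using dA(2)[of p] dB(2)[of q] by auto
  qed
  show ?thesis
  proof (rule ccontr)
    assume "dy (dx g) z \<noteq> dx (dy g) z"
    then show False
      using close[of "\<bar>dy (dx g) z - dx (dy g) z\<bar> / 2"] by simp
  qed
qed

lemma dy_dx_commute:
  fixes f :: "complex \<Rightarrow> real ^ 'n"
  assumes U: "open U" and f: "Ck 2 U f" and z: "z \<in> U"
  shows "dy (dx f) z = dx (dy f) z"
proof (rule vec_eq_iff[THEN iffD2], rule allI)
  fix i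
  have df: "\<forall>w\<in>U. f differentiable (at w)"
    and ddf: "\<forall>w\<in>U. dx f differentiable (at w)" "\<forall>w\<in>U. dy f differentiable (at w)"
    using f by (simp_all add: numeral_2_eq_2)
  have comp: "dx (\<lambda>w. f w $ i) w = dx f w $ i" "dy (\<lambda>w. f w $ i) w = dy f w $ i" if "w \<in> U" for w
    using dx_dy_bounded_linear[OF bounded_linear_vec_nth df[rule_format, OF that]] by simp_all
  have "dy (dx (\<lambda>w. f w $ i)) z = dy (\<lambda>w. dx f w $ i) z"
    by (rule dx_dy_cong_open(2)[OF U z]) (rule comp(1))
  moreover have "dx (dy (\<lambda>w. f w $ i)) z = dx (\<lambda>w. dy f w $ i) z"
    by (rule dx_dy_cong_open(1)[OF U z]) (rule comp(2))
  moreover have "dy (dx (\<lambda>w. f w $ i)) z = dx (dy (\<lambda>w. f w $ i)) z"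
    by (rule dy_dx_commute_real[OF U Ck_bounded_linear[OF U bounded_linear_vec_nth f] z])
  ultimately show "dy (dx f) z $ i = dx (dy f) z $ i"
    using dx_dy_bounded_linear[OF bounded_linear_vec_nth ddf(1)[rule_format, OF z]]
      dx_dy_bounded_linear[OF bounded_linear_vec_nth ddf(2)[rule_format, OF z]] by simp
qed

section \<open>Lorentzian algebra\<close>

lemma vec4_eq_iff: "(a :: 'a ^ 4) = b \<longleftrightarrow> a$1 = b$1 \<and> a$2 = b$2 \<and> a$3 = b$3 \<and> a$4 = b$4"
  by (simp add: vec_eq_iff forall_4)

lemma vec3_eq_iff: "(a :: 'a ^ 3) = b \<longleftrightarrow> a$1 = b$1 \<and> a$2 = b$2 \<and> a$3 = b$3"
  by (simp add: vec_eq_iff forall_3)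

lemma proj3_nth [simp]: "proj3 x $ 1 = x $ 1" "proj3 x $ 2 = x $ 2" "proj3 x $ 3 = x $ 3"
  by (simp_all add: proj3_def)

lemma horiz_nth [simp]:
  "horiz x $ 1 = x $ 1" "horiz x $ 2 = x $ 2" "horiz x $ 3 = x $ 3" "horiz x $ 4 = 0"
  by (simp_all add: horiz_def vector_def)

lemma proj3_horiz [simp]: "proj3 (horiz x) = proj3 x"
  by (simp add: vec3_eq_iff)

lemma bounded_linear_proj3: "bounded_linear proj3"
  by (simp add: linear_conv_bounded_linear[symmetric] linear_iff vec3_eq_iff)

lemma bounded_linear_horiz: "bounded_linear horiz"
  by (simp add: linear_conv_bounded_linear[symmetric] linear_iff vec4_eq_iff)

lemma lor4_commute: "lor4 a b = lor4 b a"
  by (simp add: lor4_def algebra_simps)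

lemma lor4_simps [simp]:
  fixes a b c :: "real ^ 4"
  shows "lor4 (a + b) c = lor4 a c + lor4 b c" "lor4 a (b + c) = lor4 a b + lor4 a c"
    "lor4 (a - b) c = lor4 a c - lor4 b c" "lor4 a (b - c) = lor4 a b - lor4 a c"
    "lor4 (- a) c = - lor4 a c" "lor4 a (- c) = - lor4 a c"
    "lor4 (r *\<^sub>R a) c = r * lor4 a c" "lor4 a (r *\<^sub>R c) = r * lor4 a c"
    "lor4 0 c = 0" "lor4 a 0 = 0"
    "lor4 (axis 4 1) c = c $ 4" "lor4 a (axis 4 1) = a $ 4"
  by (simp_all add: lor4_def algebra_simps axis_def)

lemma bounded_bilinear_lor4: "bounded_bilinear (lor4 :: real ^ 4 \<Rightarrow> real ^ 4 \<Rightarrow> real)"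
proof (rule bounded_bilinear.intro)
  have "\<bar>a $ i * b $ i\<bar> \<le> norm a * norm b" for a b :: "real ^ 4" and i
    unfolding abs_mult by (intro mult_mono component_le_norm_cart) auto
  then have "norm (lor4 a b) \<le> norm a * norm b * 4" for a b :: "real ^ 4"
    unfolding lor4_def real_norm_def
    by (smt (verit) abs_triangle_ineq abs_minus_cancel)
  then show "\<exists>K. \<forall>a b :: real ^ 4. norm (lor4 a b) \<le> norm a * norm b * K"
    by blast
qed simp_all

lemma lor4_horiz:
  "lor4 (horiz a) b = lor4 a b - a$4 * b$4" "lor4 a (horiz b) = lor4 a b - a$4 * b$4"
  by (simp_all add: lor4_def)

lemma lor3_proj3: "lor3 (proj3 a) (proj3 b) = lor4 a b - a$4 * b$4"
  by (simp add: lor3_def lor4_def)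

lemma lor4_dz_dz:
  "lor4 (dz f z) (dz g z) = Complex ((lor4 (dx f z) (dx g z) - lor4 (dy f z) (dy g z)) / 4)
     (- (lor4 (dx f z) (dy g z) + lor4 (dy f z) (dx g z)) / 4)"
  by (simp add: dz_def lor4_def cvec_def complex_eq_iff algebra_simps)

lemma lor3_dz_dz:
  "lor3 (dz f z) (dz g z) = Complex ((lor3 (dx f z) (dx g z) - lor3 (dy f z) (dy g z)) / 4)
     (- (lor3 (dx f z) (dy g z) + lor3 (dy f z) (dx g z)) / 4)"
  by (simp add: dz_def lor3_def cvec_def complex_eq_iff algebra_simps)

lemma lor4_orthogonal_expansion:
  fixes a b c d v :: "real ^ 4"
  assumes nonnull: "lor4 a a \<noteq> 0" "lor4 b b \<noteq> 0" "lor4 c c \<noteq> 0" "lor4 d d \<noteq> 0"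
    and orth: "lor4 a b = 0" "lor4 a c = 0" "lor4 a d = 0"
      "lor4 b c = 0" "lor4 b d = 0" "lor4 c d = 0"
  shows "v = (lor4 v a / lor4 a a) *\<^sub>R a + (lor4 v b / lor4 b b) *\<^sub>R b
           + (lor4 v c / lor4 c c) *\<^sub>R c + (lor4 v d / lor4 d d) *\<^sub>R d"
proof -
  define \<Phi> where "\<Phi> k = k$1 *\<^sub>R a + k$2 *\<^sub>R b + k$3 *\<^sub>R c + k$4 *\<^sub>R d" for k :: "real ^ 4"
  have orth': "lor4 b a = 0" "lor4 c a = 0" "lor4 d a = 0"
    "lor4 c b = 0" "lor4 d b = 0" "lor4 d c = 0"
    using orth lor4_commute by metis+
  have coord: "lor4 (\<Phi> k) a = k$1 * lor4 a a" "lor4 (\<Phi> k) b = k$2 * lor4 b b"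
    "lor4 (\<Phi> k) c = k$3 * lor4 c c" "lor4 (\<Phi> k) d = k$4 * lor4 d d" for k
    unfolding \<Phi>_def using orth orth' by simp_all
  have "inj \<Phi>"
  proof (rule injI)
    fix k l assume eq: "\<Phi> k = \<Phi> l"
    have "k$1 * lor4 a a = l$1 * lor4 a a" "k$2 * lor4 b b = l$2 * lor4 b b"
      "k$3 * lor4 c c = l$3 * lor4 c c" "k$4 * lor4 d d = l$4 * lor4 d d"
      using coord[of k] coord[of l] unfolding eq by auto
    then show "k = l"
      using nonnull by (simp add: vec4_eq_iff)
  qed
  moreover have "linear \<Phi>"
    unfolding \<Phi>_def by (rule linearI) (simp_all add: algebra_simps)
  ultimately obtain k where k: "v = \<Phi> k"
    using linear_injective_imp_surjective by (metis surjD)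
  then show ?thesis
    unfolding k coord using nonnull by (simp add: \<Phi>_def)
qed

lemma H2_same_sheet:
  assumes x: "x \<in> H2" and y: "lor3 y y = -1" and xy: "lor3 x y < 0"
  shows "y \<in> H2"
proof (rule ccontr)
  assume "y \<notin> H2"
  then have y1: "y$1 \<le> 0"
    using y by (simp add: H2_def)
  have x1: "x$1 > 0" and xx: "x$2^2 + x$3^2 = x$1^2 - 1" and yy: "y$2^2 + y$3^2 = y$1^2 - 1"
    using x y by (simp_all add: H2_def lor3_def power2_eq_square algebra_simps)
  have "(x$2 * y$2 + x$3 * y$3)^2 \<le> (x$2^2 + x$3^2) * (y$2^2 + y$3^2)"
    using sum_power2_ge_zero[of "x$2 * y$3 - x$3 * y$2" 0]
    by (simp add: power2_eq_square algebra_simps)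
  also have "\<dots> < (x$1 * y$1)^2"
  proof -
    have "x$1^2 \<ge> 1" "y$1^2 \<ge> 1"
      using xx yy by (metis add_nonneg_nonneg diff_ge_0_iff_ge zero_le_power2)+
    then show ?thesis
      unfolding xx yy by (simp add: algebra_simps)
  qed
  finally have "\<bar>x$2 * y$2 + x$3 * y$3\<bar> < - (x$1 * y$1)"
    using x1 y1 by (smt (verit) mult_nonneg_nonpos power2_le_imp_le real_sqrt_abs real_sqrt_le_iff)
  then show False
    using xy by (simp add: lor3_def)
qed

lemma lor4_product_rule:
  fixes f g :: "complex \<Rightarrow> real ^ 4"
  assumes "open U" "z \<in> U" "f differentiable (at z)" "g differentiable (at z)"
    and "\<And>w. w \<in> U \<Longrightarrow> lor4 (f w) (g w) = k w"
  shows "dx k z = lor4 (f z) (dx g z) + lor4 (dx f z) (g z)"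
    "dy k z = lor4 (f z) (dy g z) + lor4 (dy f z) (g z)"
  using dx_dy_cong_open[OF assms(1,2), of k "\<lambda>w. lor4 (f w) (g w)"] assms(5)
    dx_dy_bounded_bilinear[OF bounded_bilinear_lor4 assms(3,4)] by auto

section \<open>Surfaces with mean curvature 1/2 and the lifted Gauss map\<close>

locale cmc_half_surface =
  fixes U :: "complex set" and \<psi> \<eta> :: "complex \<Rightarrow> real ^ 4"
  assumes open_U: "open U"
    and immersion: "conformal_immersion_H2R U \<psi>"
    and normal: "unit_normal U \<psi> \<eta>"
    and angle_pos: "\<And>w. w \<in> U \<Longrightarrow> \<eta> w $ 4 > 0"
    and mean_curv_half: "\<And>w. w \<in> U \<Longrightarrow> mean_curv \<psi> \<eta> w = 1/2"
begin

definition gauss_lift :: "complex \<Rightarrow> real ^ 4" where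
  "gauss_lift w = inverse (\<eta> w $ 4) *\<^sub>R (\<eta> w + horiz (\<psi> w))"

lemma smooth_psi: "smooth_on U \<psi>"
  using immersion by (simp add: conformal_immersion_H2R_def)

lemma smooth_eta: "smooth_on U \<eta>"
  using normal by (simp add: unit_normal_def)

lemma smooth_horiz: "smooth_on U (\<lambda>w. horiz (\<psi> w))"
  by (rule smooth_on_bounded_linear[OF open_U bounded_linear_horiz smooth_psi])

lemma smooth_gauss_lift: "smooth_on U gauss_lift"
proof -
  have "smooth_on U (\<lambda>w. inverse (\<eta> w $ 4))"
    using angle_pos
    by (intro smooth_on_inverse[OF open_U] smooth_on_bounded_linear[OF open_U
        bounded_linear_vec_nth smooth_eta]) fastforce
  then show ?thesis
    unfolding gauss_lift_def[abs_def]
    by (intro smooth_on_bounded_bilinear[OF open_U bounded_bilinear_scaleR]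
        smooth_on_add[OF open_U smooth_eta smooth_horiz])
qed

lemma lor4_identity_deriv:
  fixes f g :: "complex \<Rightarrow> real ^ 4"
  assumes "w \<in> U" "smooth_on U f" "smooth_on U g" "\<And>v. v \<in> U \<Longrightarrow> lor4 (f v) (g v) = k v"
  shows "dx k w = lor4 (f w) (dx g w) + lor4 (dx f w) (g w)"
    "dy k w = lor4 (f w) (dy g w) + lor4 (dy f w) (g w)"
  using lor4_product_rule[OF open_U assms(1) smooth_on_differentiable[OF assms(2,1)]
      smooth_on_differentiable[OF assms(3,1)] assms(4)] by simp_all

lemma dx_dy_horiz:
  assumes "w \<in> U"
  shows "dx (\<lambda>w. horiz (\<psi> w)) w = horiz (dx \<psi> w)" "dy (\<lambda>w. horiz (\<psi> w)) w = horiz (dy \<psi> w)"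
  using dx_dy_bounded_linear[OF bounded_linear_horiz smooth_on_differentiable[OF smooth_psi assms]]
  by simp_all

lemma frame:
  assumes w: "w \<in> U"
  shows "conf_factor \<psi> w > 0" "lor4 (dx \<psi> w) (dx \<psi> w) = conf_factor \<psi> w"
    "lor4 (dy \<psi> w) (dy \<psi> w) = conf_factor \<psi> w" "lor4 (dx \<psi> w) (dy \<psi> w) = 0"
    "lor4 (\<eta> w) (\<eta> w) = 1" "lor4 (\<eta> w) (dx \<psi> w) = 0" "lor4 (\<eta> w) (dy \<psi> w) = 0"
    "lor4 (\<eta> w) (horiz (\<psi> w)) = 0" "lor4 (horiz (\<psi> w)) (horiz (\<psi> w)) = -1"
    "lor4 (horiz (\<psi> w)) (dx \<psi> w) = 0" "lor4 (horiz (\<psi> w)) (dy \<psi> w) = 0"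
proof -
  have H2: "proj3 (\<psi> v) \<in> H2" and conformal: "lor4 (dz \<psi> v) (dz \<psi> v) = 0"
    and pos: "conf_factor \<psi> v > 0" if "v \<in> U" for v
    using immersion that by (simp_all add: conformal_immersion_H2R_def)
  show "conf_factor \<psi> w > 0" "lor4 (dx \<psi> w) (dx \<psi> w) = conf_factor \<psi> w"
    using pos[OF w] by (simp_all add: conf_factor_def)
  show "lor4 (dy \<psi> w) (dy \<psi> w) = conf_factor \<psi> w" "lor4 (dx \<psi> w) (dy \<psi> w) = 0"
    using conformal[OF w] lor4_commute[of "dy \<psi> w" "dx \<psi> w"]
    by (simp_all add: lor4_dz_dz complex_eq_iff conf_factor_def)
  show "lor4 (\<eta> w) (\<eta> w) = 1" "lor4 (\<eta> w) (dx \<psi> w) = 0" "lor4 (\<eta> w) (dy \<psi> w) = 0"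
    "lor4 (\<eta> w) (horiz (\<psi> w)) = 0"
    using normal w by (simp_all add: unit_normal_def)
  have MM: "lor4 (horiz (\<psi> v)) (horiz (\<psi> v)) = -1" if "v \<in> U" for v
    using H2[OF that] lor3_proj3[of "horiz (\<psi> v)" "horiz (\<psi> v)"] by (simp add: H2_def)
  then show "lor4 (horiz (\<psi> w)) (horiz (\<psi> w)) = -1"
    using w .
  show "lor4 (horiz (\<psi> w)) (dx \<psi> w) = 0" "lor4 (horiz (\<psi> w)) (dy \<psi> w) = 0"
    using lor4_identity_deriv[OF w smooth_horiz smooth_horiz MM] dx_dy_horiz[OF w]
      lor4_commute[of "horiz (\<psi> w)" "horiz (dx \<psi> w)"]
      lor4_commute[of "horiz (\<psi> w)" "horiz (dy \<psi> w)"]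
    by (simp_all add: lor4_horiz)
qed

lemma frame_expansion:
  assumes w: "w \<in> U"
  shows "v = (lor4 v (dx \<psi> w) / conf_factor \<psi> w) *\<^sub>R dx \<psi> w
           + (lor4 v (dy \<psi> w) / conf_factor \<psi> w) *\<^sub>R dy \<psi> w
           + lor4 v (\<eta> w) *\<^sub>R \<eta> w - lor4 v (horiz (\<psi> w)) *\<^sub>R horiz (\<psi> w)"
  using lor4_orthogonal_expansion[of "dx \<psi> w" "dy \<psi> w" "\<eta> w" "horiz (\<psi> w)" v] frame[OF w]
  by (simp add: lor4_commute)

lemma vertical_components:
  assumes w: "w \<in> U"
  shows "(dx \<psi> w $ 4)\<^sup>2 + (dy \<psi> w $ 4)\<^sup>2 = conf_factor \<psi> w * (1 - (\<eta> w $ 4)\<^sup>2)"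
proof -
  have "lor4 (axis 4 1) (axis 4 (1 :: real)) = 1"
    by simp
  then have "1 = ((dx \<psi> w $ 4)\<^sup>2 + (dy \<psi> w $ 4)\<^sup>2) / conf_factor \<psi> w + (\<eta> w $ 4)\<^sup>2"
    by (subst (asm) (2) frame_expansion[OF w])
      (simp add: lor4_commute power2_eq_square add_divide_distrib)
  then show ?thesis
    using frame(1)[OF w] by (simp add: field_simps)
qed

lemma gauss_lift_frame:
  assumes w: "w \<in> U"
  shows "gauss_lift w $ 4 = 1" "lor4 (gauss_lift w) (gauss_lift w) = 0"
    "lor4 (gauss_lift w) (dx \<psi> w) = 0" "lor4 (gauss_lift w) (dy \<psi> w) = 0"
    "lor4 (gauss_lift w) (\<eta> w) = inverse (\<eta> w $ 4)"
    "(\<eta> w $ 4) *\<^sub>R gauss_lift w = \<eta> w + horiz (\<psi> w)"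
    "lor4 (horiz (\<psi> w)) (gauss_lift w) = - inverse (\<eta> w $ 4)"
  using frame[OF w] angle_pos[OF w] by (simp_all add: gauss_lift_def lor4_commute)

lemma gauss_lift_orthogonal_decomposition:
  assumes w: "w \<in> U" and vG: "lor4 v (gauss_lift w) = 0" and v4: "v $ 4 = 0"
  shows "v = (lor4 v (dx \<psi> w) / conf_factor \<psi> w) *\<^sub>R dx \<psi> w
           + (lor4 v (dy \<psi> w) / conf_factor \<psi> w) *\<^sub>R dy \<psi> w
           - ((lor4 v (dx \<psi> w) * dx \<psi> w $ 4 + lor4 v (dy \<psi> w) * dy \<psi> w $ 4)
               / conf_factor \<psi> w) *\<^sub>R gauss_lift w"
proof -
  define a where "a = lor4 v (dx \<psi> w) / conf_factor \<psi> w"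
  define b where "b = lor4 v (dy \<psi> w) / conf_factor \<psi> w"
  define c where "c = lor4 v (\<eta> w) * \<eta> w $ 4"
  have "lor4 v (\<eta> w + horiz (\<psi> w)) = 0"
    using vG by (simp flip: gauss_lift_frame(6)[OF w])
  then have "lor4 v (horiz (\<psi> w)) = - lor4 v (\<eta> w)"
    by simp
  then have "v = a *\<^sub>R dx \<psi> w + b *\<^sub>R dy \<psi> w + lor4 v (\<eta> w) *\<^sub>R (\<eta> w + horiz (\<psi> w))"
    using frame_expansion[OF w, of v] by (simp add: a_def b_def algebra_simps)
  also have "\<dots> = a *\<^sub>R dx \<psi> w + b *\<^sub>R dy \<psi> w + c *\<^sub>R gauss_lift w"
    by (simp add: c_def flip: gauss_lift_frame(6)[OF w])
  finally have v: "v = a *\<^sub>R dx \<psi> w + b *\<^sub>R dy \<psi> w + c *\<^sub>R gauss_lift w" .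
  have "c = - (a * dx \<psi> w $ 4 + b * dy \<psi> w $ 4)"
    using arg_cong[OF v, of "\<lambda>x. x $ 4"] v4 gauss_lift_frame(1)[OF w] by simp
  then have c: "c = - ((lor4 v (dx \<psi> w) * dx \<psi> w $ 4 + lor4 v (dy \<psi> w) * dy \<psi> w $ 4)
      / conf_factor \<psi> w)"
    by (simp add: a_def b_def add_divide_distrib)
  show ?thesis
    by (subst v) (simp only: a_def b_def c scaleR_minus_left diff_conv_add_uminus)
qed

lemma gauss_lift_orthogonal_inner:
  assumes w: "w \<in> U" and "lor4 v (gauss_lift w) = 0" "v $ 4 = 0"
  shows "conf_factor \<psi> w * lor4 v V
      = lor4 v (dx \<psi> w) * lor4 (dx \<psi> w) V + lor4 v (dy \<psi> w) * lor4 (dy \<psi> w) V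
        - (lor4 v (dx \<psi> w) * dx \<psi> w $ 4 + lor4 v (dy \<psi> w) * dy \<psi> w $ 4) * lor4 (gauss_lift w) V"
proof -
  have eq: "lor4 v V = lor4 v (dx \<psi> w) / conf_factor \<psi> w * lor4 (dx \<psi> w) V
      + lor4 v (dy \<psi> w) / conf_factor \<psi> w * lor4 (dy \<psi> w) V
      - (lor4 v (dx \<psi> w) * dx \<psi> w $ 4 + lor4 v (dy \<psi> w) * dy \<psi> w $ 4) / conf_factor \<psi> w
        * lor4 (gauss_lift w) V"
    using arg_cong[OF gauss_lift_orthogonal_decomposition[OF assms], of "\<lambda>x. lor4 x V"] by simp
  show ?thesis
    unfolding eq using frame(1)[OF w] by (simp add: field_simps)
qed

lemma psi_mixed_derivative: "w \<in> U \<Longrightarrow> dx (dy \<psi>) w = dy (dx \<psi>) w"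
  using dy_dx_commute[OF open_U smooth_on_imp_Ck[OF smooth_psi]] by simp

lemma normal_field_derivatives:
  fixes V :: "complex \<Rightarrow> real ^ 4"
  assumes w: "w \<in> U" and V: "smooth_on U V"
    and orth: "\<And>v. v \<in> U \<Longrightarrow> lor4 (V v) (dx \<psi> v) = 0" "\<And>v. v \<in> U \<Longrightarrow> lor4 (V v) (dy \<psi> v) = 0"
  shows "lor4 (dx V w) (dx \<psi> w) = - lor4 (V w) (dx (dx \<psi>) w)"
    "lor4 (dx V w) (dy \<psi> w) = - lor4 (V w) (dy (dx \<psi>) w)"
    "lor4 (dy V w) (dx \<psi> w) = - lor4 (V w) (dy (dx \<psi>) w)"
    "lor4 (dy V w) (dy \<psi> w) = - lor4 (V w) (dy (dy \<psi>) w)"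
  using lor4_identity_deriv[OF w V smooth_on_dx[OF smooth_psi] orth(1)]
    lor4_identity_deriv[OF w V smooth_on_dy[OF smooth_psi] orth(2)]
    psi_mixed_derivative[OF w] by simp_all

lemma horiz_second_derivatives:
  assumes w: "w \<in> U"
  shows "lor4 (horiz (\<psi> w)) (dx (dx \<psi>) w) = (dx \<psi> w $ 4)\<^sup>2 - conf_factor \<psi> w"
    "lor4 (horiz (\<psi> w)) (dy (dx \<psi>) w) = dx \<psi> w $ 4 * dy \<psi> w $ 4"
    "lor4 (horiz (\<psi> w)) (dy (dy \<psi>) w) = (dy \<psi> w $ 4)\<^sup>2 - conf_factor \<psi> w"
  using normal_field_derivatives[OF w smooth_horiz, OF frame(10) frame(11)]
  unfolding dx_dy_horiz[OF w] lor4_horiz using frame(2-4)[OF w]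
  by (simp_all add: lor4_commute power2_eq_square)

lemma christoffel:
  assumes w: "w \<in> U"
  shows "lor4 (dy \<psi> w) (dy (dx \<psi>) w) = lor4 (dx \<psi> w) (dx (dx \<psi>) w)"
    "lor4 (dy \<psi> w) (dy (dy \<psi>) w) = lor4 (dx \<psi> w) (dy (dx \<psi>) w)"
    "lor4 (dy \<psi> w) (dx (dx \<psi>) w) = - lor4 (dx \<psi> w) (dy (dx \<psi>) w)"
    "lor4 (dx \<psi> w) (dy (dy \<psi>) w) = - lor4 (dy \<psi> w) (dy (dx \<psi>) w)"
proof -
  have X: "smooth_on U (dx \<psi>)" and Y: "smooth_on U (dy \<psi>)"
    using smooth_psi by (simp_all add: smooth_on_dx smooth_on_dy)
  have "\<And>v. v \<in> U \<Longrightarrow> lor4 (dx \<psi> v) (dx \<psi> v) = lor4 (dy \<psi> v) (dy \<psi> v)"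
    using frame(2,3) by simp
  from lor4_identity_deriv[OF w X X this]
    lor4_identity_deriv[OF w Y Y, of "\<lambda>v. lor4 (dy \<psi> v) (dy \<psi> v)"]
  show "lor4 (dy \<psi> w) (dy (dx \<psi>) w) = lor4 (dx \<psi> w) (dx (dx \<psi>) w)"
    "lor4 (dy \<psi> w) (dy (dy \<psi>) w) = lor4 (dx \<psi> w) (dy (dx \<psi>) w)"
    using psi_mixed_derivative[OF w]
    by (simp_all add: lor4_commute[of "dx (dx \<psi>) w"] lor4_commute[of "dy (dx \<psi>) w"]
        lor4_commute[of "dy (dy \<psi>) w"])
  from lor4_identity_deriv[OF w X Y frame(4)]
  show "lor4 (dy \<psi> w) (dx (dx \<psi>) w) = - lor4 (dx \<psi> w) (dy (dx \<psi>) w)"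
    "lor4 (dx \<psi> w) (dy (dy \<psi>) w) = - lor4 (dy \<psi> w) (dy (dx \<psi>) w)"
    using psi_mixed_derivative[OF w]
    by (simp_all add: lor4_commute[of "dx (dx \<psi>) w"] lor4_commute[of "dy (dx \<psi>) w"])
qed

lemma laplacian_psi_eta:
  assumes w: "w \<in> U"
  shows "lor4 (\<eta> w) (dx (dx \<psi>) w) + lor4 (\<eta> w) (dy (dy \<psi>) w) = conf_factor \<psi> w"
  using mean_curv_half[OF w] frame(1)[OF w]
  by (simp add: mean_curv_def laplacian_def lor4_commute field_simps)

lemma gauss_lift_derivatives_orthogonal:
  assumes w: "w \<in> U"
  shows "lor4 (dx gauss_lift w) (gauss_lift w) = 0" "lor4 (dy gauss_lift w) (gauss_lift w) = 0"
    "dx gauss_lift w $ 4 = 0" "dy gauss_lift w $ 4 = 0"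
proof -
  show "lor4 (dx gauss_lift w) (gauss_lift w) = 0" "lor4 (dy gauss_lift w) (gauss_lift w) = 0"
    using lor4_identity_deriv[OF w smooth_gauss_lift smooth_gauss_lift gauss_lift_frame(2)]
    by (simp_all add: lor4_commute[of "gauss_lift w" "dx gauss_lift w"]
        lor4_commute[of "gauss_lift w" "dy gauss_lift w"])
  have "dx (\<lambda>v. gauss_lift v $ 4) w = 0" "dy (\<lambda>v. gauss_lift v $ 4) w = 0"
    using dx_dy_cong_open[OF open_U w, of "\<lambda>v. gauss_lift v $ 4" "\<lambda>v. 1"] gauss_lift_frame(1)
    by simp_all
  then show "dx gauss_lift w $ 4 = 0" "dy gauss_lift w $ 4 = 0"
    using dx_dy_bounded_linear[OF bounded_linear_vec_nth
        smooth_on_differentiable[OF smooth_gauss_lift w]] by simp_all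
qed

lemma gauss_lift_derivative_products:
  assumes w: "w \<in> U"
  shows "conf_factor \<psi> w * lor4 (dx gauss_lift w) (dx gauss_lift w)
           = (lor4 (dx gauss_lift w) (dx \<psi> w))\<^sup>2 + (lor4 (dx gauss_lift w) (dy \<psi> w))\<^sup>2"
    "conf_factor \<psi> w * lor4 (dy gauss_lift w) (dy gauss_lift w)
           = (lor4 (dy gauss_lift w) (dx \<psi> w))\<^sup>2 + (lor4 (dy gauss_lift w) (dy \<psi> w))\<^sup>2"
    "conf_factor \<psi> w * lor4 (dx gauss_lift w) (dy gauss_lift w)
           = lor4 (dx gauss_lift w) (dx \<psi> w) * lor4 (dy gauss_lift w) (dx \<psi> w)
             + lor4 (dx gauss_lift w) (dy \<psi> w) * lor4 (dy gauss_lift w) (dy \<psi> w)"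
  using gauss_lift_orthogonal_inner[OF w gauss_lift_derivatives_orthogonal(1,3)[OF w],
      of "dx gauss_lift w"]
    gauss_lift_orthogonal_inner[OF w gauss_lift_derivatives_orthogonal(2,4)[OF w],
      of "dy gauss_lift w"]
    gauss_lift_orthogonal_inner[OF w gauss_lift_derivatives_orthogonal(1,3)[OF w],
      of "dy gauss_lift w"]
    gauss_lift_derivatives_orthogonal(1,2)[OF w]
    lor4_commute[of "dx \<psi> w" "dx gauss_lift w"] lor4_commute[of "dy \<psi> w" "dx gauss_lift w"]
    lor4_commute[of "dx \<psi> w" "dy gauss_lift w"] lor4_commute[of "dy \<psi> w" "dy gauss_lift w"]
    lor4_commute[of "gauss_lift w" "dx gauss_lift w"]
    lor4_commute[of "gauss_lift w" "dy gauss_lift w"]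
  by (simp_all add: power2_eq_square)

lemma gauss_lift_shape:
  assumes w: "w \<in> U"
  shows "\<eta> w $ 4 * lor4 (dx gauss_lift w) (dx \<psi> w)
           = conf_factor \<psi> w - (dx \<psi> w $ 4)\<^sup>2 - lor4 (\<eta> w) (dx (dx \<psi>) w)"
    "\<eta> w $ 4 * lor4 (dx gauss_lift w) (dy \<psi> w)
           = - (dx \<psi> w $ 4 * dy \<psi> w $ 4) - lor4 (\<eta> w) (dy (dx \<psi>) w)"
    "\<eta> w $ 4 * lor4 (dy gauss_lift w) (dy \<psi> w)
           = conf_factor \<psi> w - (dy \<psi> w $ 4)\<^sup>2 - lor4 (\<eta> w) (dy (dy \<psi>) w)"
  using arg_cong[OF gauss_lift_frame(6)[OF w], of "\<lambda>x. lor4 x (dx (dx \<psi>) w)"]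
    arg_cong[OF gauss_lift_frame(6)[OF w], of "\<lambda>x. lor4 x (dy (dx \<psi>) w)"]
    arg_cong[OF gauss_lift_frame(6)[OF w], of "\<lambda>x. lor4 x (dy (dy \<psi>) w)"]
    normal_field_derivatives[OF w smooth_gauss_lift gauss_lift_frame(3) gauss_lift_frame(4)]
    horiz_second_derivatives[OF w]
  by (simp_all add: algebra_simps)

lemma gauss_lift_symmetric:
  "w \<in> U \<Longrightarrow> lor4 (dy gauss_lift w) (dx \<psi> w) = lor4 (dx gauss_lift w) (dy \<psi> w)"
  using normal_field_derivatives[OF _ smooth_gauss_lift gauss_lift_frame(3) gauss_lift_frame(4)]
  by simp

lemma gauss_lift_trace:
  assumes w: "w \<in> U"
  shows "lor4 (dx gauss_lift w) (dx \<psi> w) + lor4 (dy gauss_lift w) (dy \<psi> w)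
    = \<eta> w $ 4 * conf_factor \<psi> w"
proof -
  have "\<eta> w $ 4 * (lor4 (dx gauss_lift w) (dx \<psi> w) + lor4 (dy gauss_lift w) (dy \<psi> w))
      = \<eta> w $ 4 * (\<eta> w $ 4 * conf_factor \<psi> w)"
    using gauss_lift_shape[OF w] laplacian_psi_eta[OF w] vertical_components[OF w] by algebra
  then show ?thesis
    using angle_pos[OF w] by simp
qed

lemma gauss_lift_scaled_derivatives:
  assumes w: "w \<in> U"
  shows "\<eta> w $ 4 *\<^sub>R dx gauss_lift w + dx \<eta> w $ 4 *\<^sub>R gauss_lift w = dx \<eta> w + horiz (dx \<psi> w)"
    "\<eta> w $ 4 *\<^sub>R dy gauss_lift w + dy \<eta> w $ 4 *\<^sub>R gauss_lift w = dy \<eta> w + horiz (dy \<psi> w)"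
proof -
  have u: "(\<lambda>v. \<eta> v $ 4) differentiable (at w)"
    by (rule differentiable_bounded_linear[OF bounded_linear_vec_nth
          smooth_on_differentiable[OF smooth_eta w]])
  have G: "gauss_lift differentiable (at w)"
    by (rule smooth_on_differentiable[OF smooth_gauss_lift w])
  have "dx (\<lambda>v. (\<eta> v $ 4) *\<^sub>R gauss_lift v) w = dx (\<lambda>v. \<eta> v + horiz (\<psi> v)) w"
    "dy (\<lambda>v. (\<eta> v $ 4) *\<^sub>R gauss_lift v) w = dy (\<lambda>v. \<eta> v + horiz (\<psi> v)) w"
    by (rule dx_dy_cong_open[OF open_U w], erule gauss_lift_frame(6))+
  then show "\<eta> w $ 4 *\<^sub>R dx gauss_lift w + dx \<eta> w $ 4 *\<^sub>R gauss_lift w = dx \<eta> w + horiz (dx \<psi> w)"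
    "\<eta> w $ 4 *\<^sub>R dy gauss_lift w + dy \<eta> w $ 4 *\<^sub>R gauss_lift w = dy \<eta> w + horiz (dy \<psi> w)"
    using dx_dy_bounded_bilinear[OF bounded_bilinear_scaleR u G]
      dx_dy_bounded_linear[OF bounded_linear_vec_nth smooth_on_differentiable[OF smooth_eta w]]
      dx_dy_add[OF smooth_on_differentiable[OF smooth_eta w]
        smooth_on_differentiable[OF smooth_horiz w]]
      dx_dy_horiz[OF w] by simp_all
qed

lemma angle_derivatives:
  assumes w: "w \<in> U"
  shows "conf_factor \<psi> w * dx \<eta> w $ 4 = \<eta> w $ 4 * (lor4 (dx gauss_lift w) (dx \<psi> w) * dx \<psi> w $ 4
           + lor4 (dx gauss_lift w) (dy \<psi> w) * dy \<psi> w $ 4)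
           - conf_factor \<psi> w * (\<eta> w $ 4)\<^sup>2 * dx \<psi> w $ 4" (is ?x)
    and "conf_factor \<psi> w * dy \<eta> w $ 4 = \<eta> w $ 4 * (lor4 (dy gauss_lift w) (dx \<psi> w) * dx \<psi> w $ 4
           + lor4 (dy gauss_lift w) (dy \<psi> w) * dy \<psi> w $ 4)
           - conf_factor \<psi> w * (\<eta> w $ 4)\<^sup>2 * dy \<psi> w $ 4" (is ?y)
proof -
  note lifted = gauss_lift_scaled_derivatives[OF w]
  have eta_eta: "lor4 (dx \<eta> w) (\<eta> w) = 0" "lor4 (dy \<eta> w) (\<eta> w) = 0"
    using lor4_identity_deriv[OF w smooth_eta smooth_eta frame(5)]
    by (simp_all add: lor4_commute[of "\<eta> w" "dx \<eta> w"] lor4_commute[of "\<eta> w" "dy \<eta> w"])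
  have psi_eta: "lor4 (dx \<psi> w) (\<eta> w) = 0" "lor4 (dy \<psi> w) (\<eta> w) = 0"
    using frame(6,7)[OF w] by (simp_all add: lor4_commute)
  have "\<eta> w $ 4 * lor4 (dx gauss_lift w) (\<eta> w) + dx \<eta> w $ 4 * inverse (\<eta> w $ 4)
      = - (dx \<psi> w $ 4 * \<eta> w $ 4)"
    using arg_cong[OF lifted(1), of "\<lambda>x. lor4 x (\<eta> w)"] eta_eta psi_eta gauss_lift_frame(5)[OF w]
    by (simp add: lor4_horiz)
  moreover have "\<eta> w $ 4 * lor4 (dy gauss_lift w) (\<eta> w) + dy \<eta> w $ 4 * inverse (\<eta> w $ 4)
      = - (dy \<psi> w $ 4 * \<eta> w $ 4)"
    using arg_cong[OF lifted(2), of "\<lambda>x. lor4 x (\<eta> w)"] eta_eta psi_eta gauss_lift_frame(5)[OF w]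
    by (simp add: lor4_horiz)
  moreover have "conf_factor \<psi> w * lor4 (dx gauss_lift w) (\<eta> w) = - (lor4 (dx gauss_lift w) (dx \<psi> w)
      * dx \<psi> w $ 4 + lor4 (dx gauss_lift w) (dy \<psi> w) * dy \<psi> w $ 4) * inverse (\<eta> w $ 4)"
    "conf_factor \<psi> w * lor4 (dy gauss_lift w) (\<eta> w) = - (lor4 (dy gauss_lift w) (dx \<psi> w)
      * dx \<psi> w $ 4 + lor4 (dy gauss_lift w) (dy \<psi> w) * dy \<psi> w $ 4) * inverse (\<eta> w $ 4)"
    using gauss_lift_orthogonal_inner[OF w gauss_lift_derivatives_orthogonal(1,3)[OF w], of "\<eta> w"]
      gauss_lift_orthogonal_inner[OF w gauss_lift_derivatives_orthogonal(2,4)[OF w], of "\<eta> w"]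
      psi_eta gauss_lift_frame(5)[OF w] by (simp_all add: algebra_simps)
  moreover have "\<eta> w $ 4 * inverse (\<eta> w $ 4) = 1"
    using angle_pos[OF w] by simp
  ultimately show ?x ?y
    by algebra+
qed

lemma laplacian_tangential_components:
  fixes V :: "complex \<Rightarrow> real ^ 4"
  assumes w: "w \<in> U" and V: "smooth_on U V"
    and sym: "\<And>v. v \<in> U \<Longrightarrow> lor4 (dy V v) (dx \<psi> v) = lor4 (dx V v) (dy \<psi> v)"
  defines "T \<equiv> \<lambda>v. lor4 (dx V v) (dx \<psi> v) + lor4 (dy V v) (dy \<psi> v)"
  shows "lor4 (laplacian V w) (dx \<psi> w) = dx T w - lor4 (dx V w) (dx (dx \<psi>) w - dy (dy \<psi>) w)
           - 2 * lor4 (dy V w) (dy (dx \<psi>) w)"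
    "lor4 (laplacian V w) (dy \<psi> w) = dy T w - lor4 (dy V w) (dy (dy \<psi>) w - dx (dx \<psi>) w)
           - 2 * lor4 (dx V w) (dy (dx \<psi>) w)"
proof -
  have Vx: "smooth_on U (dx V)" and Vy: "smooth_on U (dy V)"
    and X: "smooth_on U (dx \<psi>)" and Y: "smooth_on U (dy \<psi>)"
    using V smooth_psi by (simp_all add: smooth_on_dx smooth_on_dy)
  have V_mixed: "dx (dy V) w = dy (dx V) w"
    using dy_dx_commute[OF open_U smooth_on_imp_Ck[OF V] w] by simp
  have T: "dx T w = lor4 (dx V w) (dx (dx \<psi>) w) + lor4 (dx (dx V) w) (dx \<psi> w)
        + lor4 (dy V w) (dx (dy \<psi>) w) + lor4 (dx (dy V) w) (dy \<psi> w)"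
    "dy T w = lor4 (dx V w) (dy (dx \<psi>) w) + lor4 (dy (dx V) w) (dx \<psi> w)
        + lor4 (dy V w) (dy (dy \<psi>) w) + lor4 (dy (dy V) w) (dy \<psi> w)"
    unfolding T_def
    using dx_dy_add[OF differentiable_bounded_bilinear[OF bounded_bilinear_lor4
          smooth_on_differentiable[OF Vx w] smooth_on_differentiable[OF X w]]
        differentiable_bounded_bilinear[OF bounded_bilinear_lor4
          smooth_on_differentiable[OF Vy w] smooth_on_differentiable[OF Y w]]]
      lor4_identity_deriv[OF w Vx X, of "\<lambda>v. lor4 (dx V v) (dx \<psi> v)"]
      lor4_identity_deriv[OF w Vy Y, of "\<lambda>v. lor4 (dy V v) (dy \<psi> v)"]
    by simp_all
  have S: "lor4 (dy V w) (dx (dx \<psi>) w) + lor4 (dx (dy V) w) (dx \<psi> w)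
        = lor4 (dx V w) (dx (dy \<psi>) w) + lor4 (dx (dx V) w) (dy \<psi> w)"
    "lor4 (dy V w) (dy (dx \<psi>) w) + lor4 (dy (dy V) w) (dx \<psi> w)
        = lor4 (dx V w) (dy (dy \<psi>) w) + lor4 (dy (dx V) w) (dy \<psi> w)"
    using lor4_identity_deriv[OF w Vy X sym]
      lor4_identity_deriv[OF w Vx Y, of "\<lambda>v. lor4 (dx V v) (dy \<psi> v)"] by simp_all
  show "lor4 (laplacian V w) (dx \<psi> w) = dx T w - lor4 (dx V w) (dx (dx \<psi>) w - dy (dy \<psi>) w)
           - 2 * lor4 (dy V w) (dy (dx \<psi>) w)"
    "lor4 (laplacian V w) (dy \<psi> w) = dy T w - lor4 (dy V w) (dy (dy \<psi>) w - dx (dx \<psi>) w)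
           - 2 * lor4 (dx V w) (dy (dx \<psi>) w)"
    using T S V_mixed psi_mixed_derivative[OF w] unfolding laplacian_def
    by (simp_all add: lor4_commute[of "dx (dx V) w"] lor4_commute[of "dy (dy V) w"]
        lor4_commute[of "dy (dx V) w"])
qed

lemma gauss_lift_trace_derivatives:
  assumes w: "w \<in> U"
  defines "T \<equiv> \<lambda>v. lor4 (dx gauss_lift v) (dx \<psi> v) + lor4 (dy gauss_lift v) (dy \<psi> v)"
  shows "dx T w = dx \<eta> w $ 4 * conf_factor \<psi> w + 2 * \<eta> w $ 4 * lor4 (dx \<psi> w) (dx (dx \<psi>) w)"
    "dy T w = dy \<eta> w $ 4 * conf_factor \<psi> w + 2 * \<eta> w $ 4 * lor4 (dx \<psi> w) (dy (dx \<psi>) w)"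
proof -
  have X: "smooth_on U (dx \<psi>)"
    using smooth_psi by (simp add: smooth_on_dx)
  have u: "(\<lambda>v. \<eta> v $ 4) differentiable (at w)"
    by (rule differentiable_bounded_linear[OF bounded_linear_vec_nth
          smooth_on_differentiable[OF smooth_eta w]])
  have T_eq: "T v = \<eta> v $ 4 * lor4 (dx \<psi> v) (dx \<psi> v)" if "v \<in> U" for v
    using gauss_lift_trace[OF that] frame(2)[OF that] by (simp add: T_def)
  have "dx T w = dx (\<lambda>v. \<eta> v $ 4 * lor4 (dx \<psi> v) (dx \<psi> v)) w"
    "dy T w = dy (\<lambda>v. \<eta> v $ 4 * lor4 (dx \<psi> v) (dx \<psi> v)) w"
    using dx_dy_cong_open[OF open_U w T_eq] by simp_all
  then show "dx T w = dx \<eta> w $ 4 * conf_factor \<psi> w + 2 * \<eta> w $ 4 * lor4 (dx \<psi> w) (dx (dx \<psi>) w)"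
    "dy T w = dy \<eta> w $ 4 * conf_factor \<psi> w + 2 * \<eta> w $ 4 * lor4 (dx \<psi> w) (dy (dx \<psi>) w)"
    using dx_dy_bounded_bilinear[OF bounded_bilinear_mult u
        differentiable_bounded_bilinear[OF bounded_bilinear_lor4,
          OF smooth_on_differentiable[OF X w]
          smooth_on_differentiable[OF X w]]]
      lor4_identity_deriv[OF w X X, of "\<lambda>v. lor4 (dx \<psi> v) (dx \<psi> v)"]
      dx_dy_bounded_linear[OF bounded_linear_vec_nth smooth_on_differentiable[OF smooth_eta w]]
      frame(2)[OF w]
    by (simp_all add: lor4_commute[of "dx (dx \<psi>) w"] lor4_commute[of "dy (dx \<psi>) w"])
qed

lemma gauss_lift_second_order_products:
  assumes w: "w \<in> U"
  defines "gxX \<equiv> lor4 (dx gauss_lift w) (dx \<psi> w)" and "gxY \<equiv> lor4 (dx gauss_lift w) (dy \<psi> w)"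
    and "gyY \<equiv> lor4 (dy gauss_lift w) (dy \<psi> w)"
    and "al \<equiv> lor4 (dx \<psi> w) (dx (dx \<psi>) w)" and "be \<equiv> lor4 (dx \<psi> w) (dy (dx \<psi>) w)"
    and "X4 \<equiv> dx \<psi> w $ 4" and "Y4 \<equiv> dy \<psi> w $ 4"
  shows "conf_factor \<psi> w * lor4 (dx gauss_lift w) (dx (dx \<psi>) w - dy (dy \<psi>) w)
      = 2 * gxX * al - 2 * gxY * be + (gxX * X4 + gxY * Y4) * (gxX - gyY)"
    "conf_factor \<psi> w * lor4 (dy gauss_lift w) (dy (dy \<psi>) w - dx (dx \<psi>) w)
      = 2 * gyY * be - 2 * gxY * al + (gxY * X4 + gyY * Y4) * (gyY - gxX)"
    "conf_factor \<psi> w * lor4 (dx gauss_lift w) (dy (dx \<psi>) w)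
      = gxX * be + gxY * al + (gxX * X4 + gxY * Y4) * gxY"
    "conf_factor \<psi> w * lor4 (dy gauss_lift w) (dy (dx \<psi>) w)
      = gxY * be + gyY * al + (gxY * X4 + gyY * Y4) * gxY"
proof -
  note defs = gxX_def gxY_def gyY_def al_def be_def X4_def Y4_def
  have gyX: "lor4 (dy gauss_lift w) (dx \<psi> w) = gxY"
    using gauss_lift_symmetric[OF w] by (simp add: gxY_def)
  have table: "lor4 (dx \<psi> w) (dy (dy \<psi>) w) = - al" "lor4 (dy \<psi> w) (dx (dx \<psi>) w) = - be"
    "lor4 (dy \<psi> w) (dy (dx \<psi>) w) = al" "lor4 (dy \<psi> w) (dy (dy \<psi>) w) = be"
    "lor4 (gauss_lift w) (dx (dx \<psi>) w) = - gxX" "lor4 (gauss_lift w) (dy (dx \<psi>) w) = - gxY"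
    "lor4 (gauss_lift w) (dy (dy \<psi>) w) = - gyY"
    using christoffel[OF w] gyX
      normal_field_derivatives[OF w smooth_gauss_lift gauss_lift_frame(3) gauss_lift_frame(4)]
    by (simp_all add: defs)
  note inner_x = gauss_lift_orthogonal_inner[OF w gauss_lift_derivatives_orthogonal(1,3)[OF w],
      folded defs]
  note inner_y = gauss_lift_orthogonal_inner[OF w gauss_lift_derivatives_orthogonal(2,4)[OF w],
      folded defs, unfolded gyX]
  show "conf_factor \<psi> w * lor4 (dx gauss_lift w) (dx (dx \<psi>) w - dy (dy \<psi>) w)
      = 2 * gxX * al - 2 * gxY * be + (gxX * X4 + gxY * Y4) * (gxX - gyY)"
    "conf_factor \<psi> w * lor4 (dy gauss_lift w) (dy (dy \<psi>) w - dx (dx \<psi>) w)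
      = 2 * gyY * be - 2 * gxY * al + (gxY * X4 + gyY * Y4) * (gyY - gxX)"
    "conf_factor \<psi> w * lor4 (dx gauss_lift w) (dy (dx \<psi>) w)
      = gxX * be + gxY * al + (gxX * X4 + gxY * Y4) * gxY"
    "conf_factor \<psi> w * lor4 (dy gauss_lift w) (dy (dx \<psi>) w)
      = gxY * be + gyY * al + (gxY * X4 + gyY * Y4) * gxY"
    using inner_x[of "dx (dx \<psi>) w - dy (dy \<psi>) w"] inner_y[of "dy (dy \<psi>) w - dx (dx \<psi>) w"]
      inner_x[of "dy (dx \<psi>) w"] inner_y[of "dy (dx \<psi>) w"]
    by (simp_all add: table algebra_simps flip: al_def be_def)
qed

lemma gauss_lift_laplacian_normal:
  assumes w: "w \<in> U"
  shows "laplacian gauss_lift w $ 4 = 0"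
    "lor4 (laplacian gauss_lift w) (gauss_lift w)
       = - (lor4 (dx gauss_lift w) (dx gauss_lift w) + lor4 (dy gauss_lift w) (dy gauss_lift w))"
proof -
  have Gx: "smooth_on U (dx gauss_lift)" and Gy: "smooth_on U (dy gauss_lift)"
    using smooth_gauss_lift by (simp_all add: smooth_on_dx smooth_on_dy)
  have "dx (\<lambda>v. dx gauss_lift v $ 4) w = 0" "dy (\<lambda>v. dy gauss_lift v $ 4) w = 0"
    using dx_dy_cong_open(1)[OF open_U w, of "\<lambda>v. dx gauss_lift v $ 4" "\<lambda>v. 0"]
      dx_dy_cong_open(2)[OF open_U w, of "\<lambda>v. dy gauss_lift v $ 4" "\<lambda>v. 0"]
      gauss_lift_derivatives_orthogonal(3,4) by simp_all
  then show "laplacian gauss_lift w $ 4 = 0"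
    using dx_dy_bounded_linear[OF bounded_linear_vec_nth smooth_on_differentiable[OF Gx w]]
      dx_dy_bounded_linear[OF bounded_linear_vec_nth smooth_on_differentiable[OF Gy w]]
    by (simp add: laplacian_def)
  show "lor4 (laplacian gauss_lift w) (gauss_lift w)
       = - (lor4 (dx gauss_lift w) (dx gauss_lift w) + lor4 (dy gauss_lift w) (dy gauss_lift w))"
    using lor4_identity_deriv(1)[OF w Gx smooth_gauss_lift gauss_lift_derivatives_orthogonal(1)]
      lor4_identity_deriv(2)[OF w Gy smooth_gauss_lift gauss_lift_derivatives_orthogonal(2)]
    by (simp add: laplacian_def)
qed

lemma gauss_lift_laplacian_tangential:
  assumes w: "w \<in> U"
  shows "lor4 (laplacian gauss_lift w) (dx \<psi> w)
      = dx \<psi> w $ 4 * lor4 (laplacian gauss_lift w) (gauss_lift w)" (is ?x)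
    and "lor4 (laplacian gauss_lift w) (dy \<psi> w)
      = dy \<psi> w $ 4 * lor4 (laplacian gauss_lift w) (gauss_lift w)" (is ?y)
proof -
  define lam u X4 Y4 where "lam = conf_factor \<psi> w" and "u = \<eta> w $ 4"
    and "X4 = dx \<psi> w $ 4" and "Y4 = dy \<psi> w $ 4"
  define gxX gxY gyY where "gxX = lor4 (dx gauss_lift w) (dx \<psi> w)"
    and "gxY = lor4 (dx gauss_lift w) (dy \<psi> w)" and "gyY = lor4 (dy gauss_lift w) (dy \<psi> w)"
  define al be where "al = lor4 (dx \<psi> w) (dx (dx \<psi>) w)" and "be = lor4 (dx \<psi> w) (dy (dx \<psi>) w)"
  note defs = lam_def u_def X4_def Y4_def gxX_def gxY_def gyY_def al_def be_def
  have gyX: "lor4 (dy gauss_lift w) (dx \<psi> w) = gxY"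
    using gauss_lift_symmetric[OF w] by (simp add: gxY_def)
  note L = laplacian_tangential_components[OF w smooth_gauss_lift gauss_lift_symmetric,
      folded defs, unfolded gyX]
  note T = gauss_lift_trace_derivatives[OF w, folded defs, unfolded gyX]
  note angle = angle_derivatives[OF w, folded defs, unfolded gyX]
  note trace = gauss_lift_trace[OF w, folded defs]
  note second = gauss_lift_second_order_products[OF w, folded defs]
  note first = gauss_lift_derivative_products[OF w, folded defs, unfolded gyX]
  note R = gauss_lift_laplacian_normal(2)[OF w]
  have "lam * lor4 (laplacian gauss_lift w) (dx \<psi> w)
      = lam * (X4 * lor4 (laplacian gauss_lift w) (gauss_lift w))"
    using L(1) T(1) angle(1) second(1,4) first(1,2) trace R by algebra
  moreover have "lam * lor4 (laplacian gauss_lift w) (dy \<psi> w)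
      = lam * (Y4 * lor4 (laplacian gauss_lift w) (gauss_lift w))"
    using L(2) T(2) angle(2) second(2,3) first(1,2) trace R by algebra
  moreover have "lam \<noteq> 0"
    using frame(1)[OF w] by (simp add: lam_def)
  ultimately show ?x ?y
    by (simp_all add: X4_def Y4_def)
qed

lemma gauss_lift_laplacian:
  assumes w: "w \<in> U"
  shows "laplacian gauss_lift w
    = lor4 (laplacian gauss_lift w) (gauss_lift w) *\<^sub>R (axis 4 1 - gauss_lift w)"
proof -
  define R where "R = lor4 (laplacian gauss_lift w) (gauss_lift w)"
  define v where "v = laplacian gauss_lift w - R *\<^sub>R (axis 4 1 - gauss_lift w)"
  have "lor4 v (gauss_lift w) = 0" "v $ 4 = 0"
    using gauss_lift_frame(1,2)[OF w] gauss_lift_laplacian_normal(1)[OF w]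
    by (simp_all add: v_def R_def)
  moreover have "lor4 v (dx \<psi> w) = 0" "lor4 v (dy \<psi> w) = 0"
    using gauss_lift_frame(3,4)[OF w] gauss_lift_laplacian_tangential[OF w]
    by (simp_all add: v_def R_def lor4_commute[of "gauss_lift w"])
  ultimately have "v = 0"
    using gauss_lift_orthogonal_decomposition[OF w, of v] by simp
  then show ?thesis
    by (simp add: v_def R_def)
qed

lemma hyp_gauss_eq: "hyp_gauss \<psi> \<eta> = (\<lambda>w. proj3 (gauss_lift w))"
  by (simp add: fun_eq_iff hyp_gauss_def gauss_lift_def vec3_eq_iff field_simps)

lemma hyp_gauss_harmonic: "harmonic_H2 U (hyp_gauss \<psi> \<eta>)"
  unfolding harmonic_H2_def hyp_gauss_eq
proof (intro conjI ballI)
  show "smooth_on U (\<lambda>w. proj3 (gauss_lift w))"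
    by (rule smooth_on_bounded_linear[OF open_U bounded_linear_proj3 smooth_gauss_lift])
next
  fix w assume w: "w \<in> U"
  have "proj3 (\<psi> w) \<in> H2"
    using immersion w by (simp add: conformal_immersion_H2R_def)
  moreover have "lor3 (proj3 (gauss_lift w)) (proj3 (gauss_lift w)) = -1"
    using gauss_lift_frame(1,2)[OF w] by (simp add: lor3_proj3)
  moreover have "lor3 (proj3 (\<psi> w)) (proj3 (gauss_lift w)) < 0"
    using gauss_lift_frame(7)[OF w] angle_pos[OF w] lor3_proj3[of "horiz (\<psi> w)" "gauss_lift w"]
    by simp
  ultimately show "proj3 (gauss_lift w) \<in> H2"
    by (rule H2_same_sheet)
  have "laplacian (\<lambda>w. proj3 (gauss_lift w)) w = proj3 (laplacian gauss_lift w)"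
    by (rule laplacian_bounded_linear[OF open_U w bounded_linear_proj3
          smooth_on_imp_Ck[OF smooth_gauss_lift]])
  moreover
  define R where "R = lor4 (laplacian gauss_lift w) (gauss_lift w)"
  have "proj3 (laplacian gauss_lift w) = - R *\<^sub>R proj3 (gauss_lift w)"
    using gauss_lift_laplacian[OF w, folded R_def] by (simp add: vec3_eq_iff axis_def)
  moreover have "lor3 (proj3 (laplacian gauss_lift w)) (proj3 (gauss_lift w)) = R"
    using gauss_lift_laplacian_normal(1)[OF w] by (simp add: lor3_proj3 R_def)
  ultimately show "laplacian (\<lambda>w. proj3 (gauss_lift w)) w
      + lor3 (laplacian (\<lambda>w. proj3 (gauss_lift w)) w) (proj3 (gauss_lift w))
        *\<^sub>R proj3 (gauss_lift w) = 0"
    by simp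
qed

lemma gauss_lift_derivative_gram:
  assumes w: "w \<in> U"
  shows "lor4 (dx gauss_lift w) (dx gauss_lift w) - lor4 (dy gauss_lift w) (dy gauss_lift w)
      = lor4 (\<eta> w) (dy (dy \<psi>) w) - lor4 (\<eta> w) (dx (dx \<psi>) w) + (dy \<psi> w $ 4)\<^sup>2 - (dx \<psi> w $ 4)\<^sup>2"
      (is ?real)
    and "lor4 (dx gauss_lift w) (dy gauss_lift w)
      = - (lor4 (\<eta> w) (dy (dx \<psi>) w) + dx \<psi> w $ 4 * dy \<psi> w $ 4)" (is ?imag)
proof -
  define gxX gxY gyY where "gxX = lor4 (dx gauss_lift w) (dx \<psi> w)"
    and "gxY = lor4 (dx gauss_lift w) (dy \<psi> w)" and "gyY = lor4 (dy gauss_lift w) (dy \<psi> w)"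
  have gyX: "lor4 (dy gauss_lift w) (dx \<psi> w) = gxY"
    using gauss_lift_symmetric[OF w] by (simp add: gxY_def)
  note products = gauss_lift_derivative_products[OF w, folded gxX_def gxY_def gyY_def, unfolded gyX]
  note shape = gauss_lift_shape[OF w, folded gxX_def gxY_def gyY_def]
  note trace = gauss_lift_trace[OF w, folded gxX_def gyY_def]
  have "conf_factor \<psi> w * (lor4 (dx gauss_lift w) (dx gauss_lift w) - lor4 (dy gauss_lift w) (dy gauss_lift w))
      = conf_factor \<psi> w * (lor4 (\<eta> w) (dy (dy \<psi>) w) - lor4 (\<eta> w) (dx (dx \<psi>) w)
        + (dy \<psi> w $ 4)\<^sup>2 - (dx \<psi> w $ 4)\<^sup>2)"
    using products(1,2) shape(1,3) trace by algebra
  moreover have "conf_factor \<psi> w * lor4 (dx gauss_lift w) (dy gauss_lift w)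
      = conf_factor \<psi> w * - (lor4 (\<eta> w) (dy (dx \<psi>) w) + dx \<psi> w $ 4 * dy \<psi> w $ 4)"
    using products(3) shape(2) trace by algebra
  ultimately show ?real ?imag
    using frame(1)[OF w] by simp_all
qed

lemma hyp_gauss_dz_square:
  assumes w: "w \<in> U"
  shows "lor3 (dz (hyp_gauss \<psi> \<eta>) w) (dz (hyp_gauss \<psi> \<eta>) w) = - AR_diff \<psi> \<eta> w"
proof -
  define X4 Y4 where "X4 = dx \<psi> w $ 4" and "Y4 = dy \<psi> w $ 4"
  define L M N where "L = lor4 (\<eta> w) (dx (dx \<psi>) w)" and "M = lor4 (\<eta> w) (dy (dx \<psi>) w)"
    and "N = lor4 (\<eta> w) (dy (dy \<psi>) w)"
  note defs = X4_def Y4_def L_def M_def N_def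
  have dG: "dx (hyp_gauss \<psi> \<eta>) w = proj3 (dx gauss_lift w)"
    "dy (hyp_gauss \<psi> \<eta>) w = proj3 (dy gauss_lift w)"
    unfolding hyp_gauss_eq
    using dx_dy_bounded_linear[OF bounded_linear_proj3 smooth_on_differentiable[OF smooth_gauss_lift w]]
    by simp_all
  have "lor3 (dz (hyp_gauss \<psi> \<eta>) w) (dz (hyp_gauss \<psi> \<eta>) w)
      = Complex ((N - L + Y4\<^sup>2 - X4\<^sup>2) / 4) ((M + X4 * Y4) / 2)"
    using gauss_lift_derivative_gram[OF w, folded defs] gauss_lift_derivatives_orthogonal(3,4)[OF w]
    by (simp add: lor3_dz_dz dG lor3_proj3 lor4_commute[of "dy gauss_lift w" "dx gauss_lift w"])
  moreover have eta: "lor4 (dx \<psi> w) (dx \<eta> w) = - L" "lor4 (dy \<psi> w) (dy \<eta> w) = - N"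
    "lor4 (dx \<psi> w) (dy \<eta> w) = - M" "lor4 (dy \<psi> w) (dx \<eta> w) = - M"
    using normal_field_derivatives[OF w smooth_eta frame(6) frame(7)]
    by (simp_all add: defs lor4_commute[of "dx \<psi> w"] lor4_commute[of "dy \<psi> w"])
  moreover have "dx (height \<psi>) w = X4" "dy (height \<psi>) w = Y4"
    using dx_dy_bounded_linear[OF bounded_linear_vec_nth smooth_on_differentiable[OF smooth_psi w], of 4]
    by (simp_all add: defs height_def[abs_def])
  ultimately show ?thesis
    by (simp add: AR_diff_def hopf_def lor4_dz_dz dz_real_def mean_curv_half[OF w] complex_eq_iff
        power2_eq_square field_simps)
qed

end

theorem mainTheorem4:
  fixes U :: "complex set" and \<psi> \<eta> :: "complex \<Rightarrow> real ^ 4"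
  assumes "open U" and "connected U" and "U \<noteq> {}"
    and "conformal_immersion_H2R U \<psi>"
    and "\<not> (\<exists>c. \<forall>z\<in>U. height \<psi> z = c)"
    and "unit_normal U \<psi> \<eta>"
    and "\<forall>z\<in>U. \<eta> z $ 4 > 0"
    and "\<forall>z\<in>U. mean_curv \<psi> \<eta> z = 1/2"
  shows "harmonic_H2 U (hyp_gauss \<psi> \<eta>) \<and>
         (\<forall>z\<in>U. lor3 (dz (hyp_gauss \<psi> \<eta>) z) (dz (hyp_gauss \<psi> \<eta>) z) = - AR_diff \<psi> \<eta> z)"
proof -
  interpret cmc_half_surface U \<psi> \<eta>
    using assms(1,4,6-8) by unfold_locales auto
  show ?thesis
    using hyp_gauss_harmonic hyp_gauss_dz_square by blast
qed

end
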